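(* Let $q$ be a prime power, $\mathbb{F}:=\mathbb{F}_q$, $\alpha\in\mathbb{F}$ with $\mathrm{ord}(\alpha)=n$, $0\leq\delta\leq n-1$, $A:=\mathbb{F}[x]/\langle x^n-1\rangle$, and let $\sigma\in\mathrm{Aut}_{\mathbb{F}}(A)$ be defined by $\sigma(x)=\alpha x$. Let $\mathcal{C}:=\mathrm{im}\,G\subseteq\mathbb{F}[z]^n$ where $G:=\sum_{\nu=0}^{\delta}z^\nu\begin{pmatrix}1&\alpha^\nu&\alpha^{2\nu}&\ldots&\alpha^{(n-1)\nu}\end{pmatrix}$. Then: (a) $\mathfrak{p}(\mathcal{C})$ is the left ideal in $A[z;\sigma]$ generated by the element \[ \sum_{\nu=0}^{\delta}z^\nu\sum_{i=0}^{n-1}\alpha^{\nu i}x^i=\prod_{i=1}^{n-1}(x-\alpha^i)\sum_{\nu=0}^{\delta}z^\nu; \] (b) $\mathfrak{p}(\mathcal{C})$ is the left ideal in $A[z;\sigma]$ generated by the element \[ \varepsilon_0\sum_{\nu=0}^{\delta}z^\nu=\varepsilon_0(1+z\varepsilon_{n-1})(1+z\varepsilon_{n-2})\cdots(1+z\varepsilon_{n-\delta}) \] (the product being empty, i.e. equal to $1$, when $\delta=0$).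
   Context: $\mathrm{ord}(\alpha)$ is the multiplicative order of $\alpha$. For $\sigma\in\mathrm{Aut}_{\mathbb{F}}(A)$, the skew polynomial ring $A[z;\sigma]$ is the set of polynomials $\sum_\nu z^\nu a_\nu$ ($a_\nu\in A$) with usual addition and multiplication determined by associativity, distributivity, the multiplication of $A$, and the rule $az=z\sigma(a)$ for $a\in A$. The map $\mathfrak{p}:\mathbb{F}[z]^n\to A[z;\sigma]$ is $\sum_\nu z^\nu v_\nu\mapsto\sum_\nu z^\nu\sum_{i=0}^{n-1}v_{\nu,i}x^i$ for $v_\nu=(v_{\nu,0},\ldots,v_{\nu,n-1})\in\mathbb{F}^n$. For $k=0,\ldots,n-1$, $\varepsilon_k\in A$ is the primitive idempotent corresponding to the factor $x-\alpha^k$ of $x^n-1=\prod_{i=0}^{n-1}(x-\alpha^i)$, i.e. the unique element of $A$ with $\varepsilon_k(\alpha^i)=\delta_{k,i}$ for $i=0,\ldots,n-1$ (evaluation of a representative). *)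

theory Defs
  imports "HOL-Computational_Algebra.Polynomial"
begin

definition mult_ord :: "'a::field \<Rightarrow> nat" where
  "mult_ord a = (if \<exists>k>0. a ^ k = 1 then (LEAST k. 0 < k \<and> a ^ k = 1) else 0)"

text \<open>The ring A = F[x]/<x^n - 1>, elements represented by their reduced
  representatives (polynomials in x of degree < n).\<close>
definition xn1 :: "nat \<Rightarrow> 'a::field poly" where
  "xn1 n = monom 1 n - 1"

definition A_red :: "nat \<Rightarrow> 'a::field poly \<Rightarrow> 'a poly" where
  "A_red n p = p mod xn1 n"

definition A_carrier :: "nat \<Rightarrow> 'a::field poly set" where
  "A_carrier n = {p. A_red n p = p}"

definition A_mult :: "nat \<Rightarrow> 'a::field poly \<Rightarrow> 'a poly \<Rightarrow> 'a poly" where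
  "A_mult n a b = A_red n (a * b)"

text \<open>The automorphism sigma of A with sigma(x) = alpha x, i.e. sigma(a)(x) = a(alpha x).\<close>
definition A_sigma :: "nat \<Rightarrow> 'a::field \<Rightarrow> 'a poly \<Rightarrow> 'a poly" where
  "A_sigma n \<alpha> a = A_red n (pcompose a [:0, \<alpha>:])"

text \<open>Skew polynomial ring A[z;sigma]: an element \<Sum> z^nu a_nu is represented by
  the polynomial (in z) whose nu-th coefficient is a_nu \<in> A.  Multiplication is
  determined by a z = z sigma(a), i.e. (z^mu a)(z^nu b) = z^(mu+nu) sigma^nu(a) b.\<close>
definition skew_carrier :: "nat \<Rightarrow> 'a::field poly poly set" where
  "skew_carrier n = {f. \<forall>k. coeff f k \<in> A_carrier n}"

definition skew_mult :: "nat \<Rightarrow> 'a::field \<Rightarrow> 'a poly poly \<Rightarrow> 'a poly poly \<Rightarrow> 'a poly poly" where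
  "skew_mult n \<alpha> f g =
     (\<Sum>\<mu>\<le>degree f. \<Sum>\<nu>\<le>degree g.
        monom (A_mult n ((A_sigma n \<alpha> ^^ \<nu>) (coeff f \<mu>)) (coeff g \<nu>)) (\<mu> + \<nu>))"

definition skew_left_ideal :: "nat \<Rightarrow> 'a::field \<Rightarrow> 'a poly poly \<Rightarrow> 'a poly poly set" where
  "skew_left_ideal n \<alpha> g = {skew_mult n \<alpha> f g | f. f \<in> skew_carrier n}"

text \<open>The map p : F[z]^n \<rightarrow> A[z;sigma]; a vector in F[z]^n is a function
  v :: nat \<Rightarrow> 'a poly, of which only the entries v 0, ..., v (n-1) are used.\<close>
definition pmap :: "nat \<Rightarrow> (nat \<Rightarrow> 'a::field poly) \<Rightarrow> 'a poly poly" where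
  "pmap n v = (\<Sum>i<n. \<Sum>\<nu>\<le>degree (v i). monom (monom (coeff (v i) \<nu>) i) \<nu>)"

definition G_entry :: "'a::field \<Rightarrow> nat \<Rightarrow> nat \<Rightarrow> 'a poly" where
  "G_entry \<alpha> \<delta> i = (\<Sum>\<nu>\<le>\<delta>. monom (\<alpha> ^ (\<nu> * i)) \<nu>)"

definition code_C :: "nat \<Rightarrow> 'a::field \<Rightarrow> nat \<Rightarrow> (nat \<Rightarrow> 'a poly) set" where
  "code_C n \<alpha> \<delta> = {(\<lambda>i. if i < n then u * G_entry \<alpha> \<delta> i else 0) | u. True}"

definition eps :: "nat \<Rightarrow> 'a::field \<Rightarrow> nat \<Rightarrow> 'a poly" where
  "eps n \<alpha> k = (THE e. e \<in> A_carrier n \<and>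
                       (\<forall>i<n. poly e (\<alpha> ^ i) = (if i = k then 1 else 0)))"

definition zsum :: "nat \<Rightarrow> 'a::field poly poly" where
  "zsum \<delta> = (\<Sum>\<nu>\<le>\<delta>. monom 1 \<nu>)"

end

theory Submission
  imports Defs
begin

(* Since alpha has order n, x^n - 1 = prod_{i<n} (x - alpha^i) has n distinct roots, so an
   element a of A = F[x]/<x^n - 1> is determined by its values a(alpha^j), j < n.  In these
   coordinates multiplication in A is pointwise and sigma is a shift, (sigma a)(alpha^j) =
   a(alpha^(j+1)); hence the k-th coefficient of f g in A[z;sigma] takes the value
   sum_nu f_(k-nu)(alpha^(j+nu)) g_nu(alpha^j) at alpha^j, and all identities are checked
   pointwise.  For both generators the nu-th coefficient vanishes at alpha^j unless
   alpha^(j+nu) = 1, so f acts on them by left multiplication exactly like the polynomial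
   f(1) in F[z] obtained by evaluating the coefficients of f at x = 1.  Their left ideals
   therefore consist of the F[z]-multiples, which p identifies with im G, and the two
   generators differ by the unit n = prod_{i=1}^{n-1} (1 - alpha^i). *)

lemma nat_dvd_iff_eq_of_less_double:
  fixes m n :: nat
  assumes "0 < m" "m < 2 * n"
  shows "n dvd m \<longleftrightarrow> m = n"
proof
  assume "n dvd m"
  then obtain k where k: "m = n * k" ..
  with assms have "n * k < n * 2" "0 < k"
    by (simp_all add: mult.commute)
  then have "0 < k" "k < 2"
    by simp_all
  then show "m = n"
    using k by (simp add: numeral_2_eq_2 less_Suc_eq)
qed simp

lemma A_red_0 [simp]: "A_red n 0 = 0"
  by (simp add: A_red_def)

lemma A_mult_0 [simp]: "A_mult n a 0 = 0" "A_mult n 0 a = 0"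
  by (simp_all add: A_mult_def)

lemma A_sigma_iter_0 [simp]: "(A_sigma n \<alpha> ^^ \<nu>) 0 = 0"
  by (induction \<nu>) (simp_all add: A_sigma_def)

lemma coeff_skew_mult:
  "coeff (skew_mult n \<alpha> f g) k =
     (\<Sum>\<nu>\<le>k. A_mult n ((A_sigma n \<alpha> ^^ \<nu>) (coeff f (k - \<nu>))) (coeff g \<nu>))"
proof -
  define T where "T \<mu> \<nu> = A_mult n ((A_sigma n \<alpha> ^^ \<nu>) (coeff f \<mu>)) (coeff g \<nu>)" for \<mu> \<nu>
  have T_f: "T \<mu> \<nu> = 0" if "degree f < \<mu>" for \<mu> \<nu>
    using that by (simp add: T_def coeff_eq_0)
  have T_g: "T \<mu> \<nu> = 0" if "degree g < \<nu>" for \<mu> \<nu>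
    using that by (simp add: T_def coeff_eq_0)
  have "coeff (skew_mult n \<alpha> f g) k =
      (\<Sum>\<nu>\<le>degree g. \<Sum>\<mu>\<le>degree f. if \<mu> = k - \<nu> \<and> \<nu> \<le> k then T \<mu> \<nu> else 0)"
    unfolding skew_mult_def coeff_sum coeff_monom T_def
    by (subst sum.swap) (intro sum.cong refl; auto)
  also have "\<dots> = (\<Sum>\<nu>\<le>degree g. if \<nu> \<le> k then T (k - \<nu>) \<nu> else 0)"
    by (intro sum.cong refl) (auto simp: T_f not_le)
  also have "\<dots> = (\<Sum>\<nu>\<le>degree g + k. if \<nu> \<le> k then T (k - \<nu>) \<nu> else 0)"
    by (intro sum.mono_neutral_left) (auto simp: T_g)
  also have "\<dots> = (\<Sum>\<nu>\<le>k. T (k - \<nu>) \<nu>)"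
    by (intro sum.mono_neutral_cong_right) auto
  finally show ?thesis
    by (simp add: T_def)
qed

lemma skew_mult_one_right:
  assumes "f \<in> skew_carrier n"
  shows "skew_mult n \<alpha> f 1 = f"
proof (rule poly_eqI)
  fix k
  have "coeff (skew_mult n \<alpha> f 1) k = (\<Sum>\<nu>\<le>k. if \<nu> = 0 then A_mult n (coeff f k) 1 else 0)"
    unfolding coeff_skew_mult by (intro sum.cong refl) auto
  then have "coeff (skew_mult n \<alpha> f 1) k = A_mult n (coeff f k) 1"
    by simp
  then show "coeff (skew_mult n \<alpha> f 1) k = coeff f k"
    using assms by (simp add: A_mult_def skew_carrier_def A_carrier_def)
qed

lemma A_red_smult: "A_red n (smult c p) = smult c (A_red n p)"
  by (simp add: A_red_def mod_smult_left)

lemma A_sigma_iter_smult: "(A_sigma n \<alpha> ^^ \<nu>) (smult c a) = smult c ((A_sigma n \<alpha> ^^ \<nu>) a)"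
  by (induction \<nu>) (simp_all add: A_sigma_def pcompose_smult A_red_smult)

lemma A_mult_smult_left: "A_mult n (smult c a) b = smult c (A_mult n a b)"
  by (simp add: A_mult_def A_red_smult)

lemma A_mult_smult_right: "A_mult n a (smult c b) = smult c (A_mult n a b)"
  by (simp add: A_mult_def A_red_smult)

lemma skew_mult_smult_right:
  "skew_mult n \<alpha> f (smult [:c:] g) = skew_mult n \<alpha> (smult [:c:] f) g"
  by (rule poly_eqI)
    (simp add: coeff_skew_mult A_sigma_iter_smult A_mult_smult_left A_mult_smult_right)

lemma smult_const_in_skew_carrier:
  "f \<in> skew_carrier n \<Longrightarrow> smult [:c:] f \<in> skew_carrier n"
  by (simp add: skew_carrier_def A_carrier_def A_red_smult)

lemma skew_left_ideal_smult:
  assumes "c \<noteq> 0"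
  shows "skew_left_ideal n \<alpha> (smult [:c:] g) = skew_left_ideal n \<alpha> g"
proof
  show "skew_left_ideal n \<alpha> (smult [:c:] g) \<subseteq> skew_left_ideal n \<alpha> g"
    unfolding skew_left_ideal_def skew_mult_smult_right
    by (blast intro: smult_const_in_skew_carrier)
  have "skew_mult n \<alpha> f g = skew_mult n \<alpha> (smult [:inverse c:] f) (smult [:c:] g)" for f
    using assms by (simp add: skew_mult_smult_right flip: one_pCons)
  then show "skew_left_ideal n \<alpha> g \<subseteq> skew_left_ideal n \<alpha> (smult [:c:] g)"
    unfolding skew_left_ideal_def by (blast intro: smult_const_in_skew_carrier)
qed

definition lift_poly :: "'a::zero poly \<Rightarrow> 'a poly poly" where
  "lift_poly u = map_poly (\<lambda>c. [:c:]) u"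

lemma coeff_lift_poly [simp]: "coeff (lift_poly u) k = [:coeff u k:]"
  by (simp add: lift_poly_def coeff_map_poly)

lemma coeff_pmap: "coeff (pmap n v) k = (\<Sum>i<n. monom (coeff (v i) k) i)"
  unfolding pmap_def coeff_sum coeff_monom
  by (intro sum.cong refl) (auto simp: coeff_eq_0)

lemma poly_coeff_pmap: "poly (coeff (pmap n v) k) y = (\<Sum>i<n. coeff (v i) k * y ^ i)"
  by (simp add: coeff_pmap poly_sum poly_monom)

lemma pmap_restrict: "pmap n (\<lambda>i. if i < n then v i else w i) = pmap n v"
  unfolding pmap_def by (rule sum.cong) simp_all

lemma coeff_G_entry: "coeff (G_entry \<alpha> \<delta> i) k = (if k \<le> \<delta> then \<alpha> ^ (k * i) else 0)"
  by (simp add: G_entry_def coeff_sum)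

lemma pmap_G_entry: "pmap n (G_entry \<alpha> \<delta>) = (\<Sum>\<nu>\<le>\<delta>. monom (\<Sum>i<n. monom (\<alpha> ^ (\<nu> * i)) i) \<nu>)"
  by (rule poly_eqI) (simp add: coeff_pmap coeff_G_entry coeff_sum)

lemma coeff_zsum: "coeff (zsum \<delta>) k = (if k \<le> \<delta> then 1 else 0)"
  by (simp add: zsum_def coeff_sum)

locale primitive_root =
  fixes n :: nat and \<alpha> :: "'a::field"
  assumes order_pos: "0 < n"
    and power_order: "\<alpha> ^ n = 1"
    and power_ne_one: "0 < k \<Longrightarrow> k < n \<Longrightarrow> \<alpha> ^ k \<noteq> 1"

lemma primitive_root_mult_ord:
  fixes \<alpha> :: "'a::{field,finite}"
  assumes "\<alpha> \<noteq> 0"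
  shows "primitive_root (mult_ord \<alpha>) \<alpha>"
proof -
  have "\<not> inj (\<lambda>k::nat. \<alpha> ^ k)"
    using finite_imageD[of "\<lambda>k::nat. \<alpha> ^ k" UNIV] by auto
  then obtain i j :: nat where "i < j" "\<alpha> ^ i = \<alpha> ^ j"
    unfolding inj_def by (metis linorder_neqE_nat)
  moreover have "\<alpha> ^ i * \<alpha> ^ (j - i) = \<alpha> ^ j"
    using \<open>i < j\<close> by (simp flip: power_add)
  ultimately have "\<alpha> ^ i * \<alpha> ^ (j - i) = \<alpha> ^ i * 1"
    by simp
  then have ex: "\<exists>k>0. \<alpha> ^ k = 1"
    using \<open>i < j\<close> assms by (intro exI[of _ "j - i"]) auto
  then have ord: "mult_ord \<alpha> = (LEAST k. 0 < k \<and> \<alpha> ^ k = 1)"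
    by (simp add: mult_ord_def)
  have "0 < mult_ord \<alpha> \<and> \<alpha> ^ mult_ord \<alpha> = 1"
    unfolding ord by (rule LeastI_ex[OF ex])
  moreover have "\<alpha> ^ k \<noteq> 1" if "0 < k" "k < mult_ord \<alpha>" for k
    using not_less_Least[of k "\<lambda>k. 0 < k \<and> \<alpha> ^ k = 1"] that unfolding ord by blast
  ultimately show ?thesis
    by (intro primitive_root.intro) auto
qed

context primitive_root
begin

lemma power_mod_order: "\<alpha> ^ (m mod n) = \<alpha> ^ m"
proof -
  have "\<alpha> ^ m = \<alpha> ^ (n * (m div n) + m mod n)"
    by simp
  also have "\<dots> = (\<alpha> ^ n) ^ (m div n) * \<alpha> ^ (m mod n)"
    by (simp only: power_add power_mult)
  also have "\<dots> = \<alpha> ^ (m mod n)"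
    by (simp add: power_order)
  finally show ?thesis ..
qed

lemma power_eq_one_iff: "\<alpha> ^ m = 1 \<longleftrightarrow> n dvd m"
proof -
  have "\<alpha> ^ m = \<alpha> ^ (m mod n)"
    by (simp only: power_mod_order)
  then show ?thesis
    using power_ne_one[of "m mod n"] order_pos by (auto simp: dvd_eq_mod_eq_0)
qed

lemma inj_on_powers: "inj_on (\<lambda>j. \<alpha> ^ j) {..<n}"
proof (rule inj_onI)
  fix i j assume ij: "i \<in> {..<n}" "j \<in> {..<n}" "\<alpha> ^ i = \<alpha> ^ j"
  then have "\<alpha> ^ (i + (n - j)) = \<alpha> ^ (j + (n - j))"
    by (simp only: power_add)
  then have "\<alpha> ^ (i + (n - j)) = \<alpha> ^ n"
    using ij by simp
  then have "n dvd i + (n - j)"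
    by (simp add: power_order power_eq_one_iff)
  moreover have "0 < i + (n - j)" "i + (n - j) < 2 * n"
    using ij(1,2) by auto
  ultimately have "i + (n - j) = n"
    by (simp add: nat_dvd_iff_eq_of_less_double)
  then show "i = j"
    using ij(1,2) by simp
qed

lemma card_powers: "card ((\<lambda>j. \<alpha> ^ j) ` {..<n}) = n"
  by (simp add: card_image inj_on_powers)

lemma power_power_order: "(\<alpha> ^ j) ^ n = 1"
  by (metis mult.commute power_mult power_one power_order)

lemma degree_xn1: "degree (xn1 n :: 'a poly) = n"
proof -
  have "degree (monom 1 n + - 1 :: 'a poly) = n"
    using order_pos by (subst degree_add_eq_left) (auto simp: degree_monom_eq)
  then show ?thesis
    by (simp add: xn1_def)
qed

lemma poly_xn1_power: "poly (xn1 n) (\<alpha> ^ j) = 0"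
  by (simp add: xn1_def poly_monom power_power_order)

lemma poly_A_red: "poly (A_red n p) (\<alpha> ^ j) = poly p (\<alpha> ^ j)"
  unfolding A_red_def by (rule poly_mod) (rule poly_xn1_power)

lemma degree_A_red: "degree (A_red n (p :: 'a poly)) < n"
proof -
  have "xn1 n \<noteq> (0 :: 'a poly)"
    using degree_xn1 order_pos by auto
  then have "degree (p mod xn1 n) < n" if "p mod xn1 n \<noteq> 0"
    using degree_mod_less'[of "xn1 n" p] that degree_xn1 by simp
  then show ?thesis
    using order_pos by (cases "p mod xn1 n = 0") (auto simp: A_red_def)
qed

lemma A_red_eq_self:
  assumes "degree (p :: 'a poly) < n"
  shows "A_red n p = p"
  using assms by (simp add: A_red_def degree_xn1 mod_poly_less)

lemma A_carrier_iff: "(p :: 'a poly) \<in> A_carrier n \<longleftrightarrow> degree p < n"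
  using degree_A_red[of p] A_red_eq_self[of p] unfolding A_carrier_def by auto

lemma A_eqI:
  assumes "degree p < n" "degree q < n"
    and "\<And>j. j < n \<Longrightarrow> poly p (\<alpha> ^ j) = poly q (\<alpha> ^ j)"
  shows "p = q"
  using assms card_powers by (intro poly_eqI_degree[of "(\<lambda>j. \<alpha> ^ j) ` {..<n}"]) auto

lemma poly_A_sigma_iter: "poly ((A_sigma n \<alpha> ^^ \<nu>) a) (\<alpha> ^ j) = poly a (\<alpha> ^ (j + \<nu>))"
proof (induction \<nu> arbitrary: j)
  case (Suc \<nu>)
  have "poly ((A_sigma n \<alpha> ^^ Suc \<nu>) a) (\<alpha> ^ j) = poly ((A_sigma n \<alpha> ^^ \<nu>) a) (\<alpha> ^ Suc j)"
    by (simp add: A_sigma_def poly_A_red poly_pcompose mult.commute)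
  also have "\<dots> = poly a (\<alpha> ^ (Suc j + \<nu>))"
    by (rule Suc.IH)
  finally show ?case
    by simp
qed simp

lemma poly_A_mult: "poly (A_mult n a b) (\<alpha> ^ j) = poly a (\<alpha> ^ j) * poly b (\<alpha> ^ j)"
  by (simp add: A_mult_def poly_A_red)

lemma prod_linear_factors_eq_xn1: "(\<Prod>i<n. [:- (\<alpha> ^ i), 1:]) = xn1 n"
proof (rule poly_eqI_degree_lead_coeff[where n = n and A = "(\<lambda>j. \<alpha> ^ j) ` {..<n}"])
  have "degree (\<Prod>i<n. [:- (\<alpha> ^ i), 1:]) = n"
    by (simp add: degree_prod_eq_sum_degree)
  moreover have "lead_coeff (\<Prod>i<n. [:- (\<alpha> ^ i), 1:]) = 1"
    by (simp add: lead_coeff_prod)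
  ultimately show "coeff (\<Prod>i<n. [:- (\<alpha> ^ i), 1:]) n = coeff (xn1 n) n"
    and "degree (\<Prod>i<n. [:- (\<alpha> ^ i), 1:]) \<le> n"
    using order_pos by (auto simp: lead_coeff_prod xn1_def)
  show "n \<le> card ((\<lambda>j. \<alpha> ^ j) ` {..<n})" "degree (xn1 n :: 'a poly) \<le> n"
    by (simp_all add: card_powers degree_xn1)
  show "poly (\<Prod>i<n. [:- (\<alpha> ^ i), 1:]) z = poly (xn1 n) z" if "z \<in> (\<lambda>j. \<alpha> ^ j) ` {..<n}" for z
    using that by (auto simp: poly_prod poly_xn1_power)
qed

lemma prod_nontrivial_factors: "(\<Prod>i\<in>{1..<n}. [:- (\<alpha> ^ i), 1:]) = (\<Sum>i<n. monom 1 i)"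
proof -
  have "[:-1, 1:] * (\<Prod>i\<in>{1..<n}. [:- (\<alpha> ^ i), 1:]) = (\<Prod>i<n. [:- (\<alpha> ^ i), 1:])"
    using order_pos by (simp add: lessThan_atLeast0 prod.atLeast_Suc_lessThan)
  also have "\<dots> = [:0, 1:] ^ n - 1"
    by (simp add: prod_linear_factors_eq_xn1 xn1_def monom_altdef)
  also have "\<dots> = ([:0, 1:] - 1) * (\<Sum>i<n. [:0, 1:] ^ i)"
    by (rule power_diff_1_eq)
  also have "\<dots> = [:-1, 1:] * (\<Sum>i<n. monom 1 i)"
    by (simp add: monom_altdef one_pCons)
  finally show ?thesis
    by (rule mult_left_cancel[THEN iffD1, rotated]) simp
qed

lemma of_nat_order_ne_0: "(of_nat n :: 'a) \<noteq> 0"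
proof -
  have "(of_nat n :: 'a) = poly (\<Sum>i<n. monom 1 i) 1"
    by (simp add: poly_sum poly_monom)
  also have "\<dots> = (\<Prod>i\<in>{1..<n}. 1 - \<alpha> ^ i)"
    by (simp add: poly_prod flip: prod_nontrivial_factors)
  also have "\<dots> \<noteq> 0"
    using power_ne_one by auto
  finally show ?thesis .
qed

lemma geometric_sum_powers: "(\<Sum>i<n. (\<alpha> ^ m) ^ i) = (if n dvd m then of_nat n else 0)"
proof (cases "n dvd m")
  case False
  then have "\<alpha> ^ m \<noteq> 1"
    by (simp add: power_eq_one_iff)
  have "(\<alpha> ^ m - 1) * (\<Sum>i<n. (\<alpha> ^ m) ^ i) = (\<alpha> ^ m) ^ n - 1"
    by (simp add: power_diff_1_eq)
  also have "\<dots> = 0"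
    by (simp add: power_power_order)
  finally show ?thesis
    using False \<open>\<alpha> ^ m \<noteq> 1\<close> by simp
next
  case True
  then have "\<alpha> ^ m = 1"
    by (simp add: power_eq_one_iff)
  then show ?thesis
    using True by simp
qed

lemma eps_spec:
  assumes "k < n"
  shows "eps n \<alpha> k \<in> A_carrier n"
    and "j < n \<Longrightarrow> poly (eps n \<alpha> k) (\<alpha> ^ j) = (if j = k then 1 else 0)"
proof -
  (* Fourier inversion: e = (1/n) sum_i alpha^(-k i) x^i, with alpha^(n-k) for alpha^(-k) *)
  define e :: "'a poly" where "e = (\<Sum>i<n. monom (\<alpha> ^ ((n - k) * i) / of_nat n) i)"
  have "degree e < n"
    unfolding e_def using order_pos
    by (intro degree_sum_less) (auto intro: le_less_trans[OF degree_monom_le])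
  moreover have "poly e (\<alpha> ^ j) = (if j = k then 1 else 0)" if "j < n" for j
  proof -
    have "poly e (\<alpha> ^ j) = (\<Sum>i<n. (\<alpha> ^ (n - k + j)) ^ i) / of_nat n"
      by (simp add: e_def poly_sum poly_monom sum_divide_distrib power_add power_mult
          power_mult_distrib)
    moreover have "n dvd n - k + j \<longleftrightarrow> j = k"
      using assms that nat_dvd_iff_eq_of_less_double[of "n - k + j" n] by auto
    ultimately show ?thesis
      using of_nat_order_ne_0 by (simp add: geometric_sum_powers)
  qed
  ultimately have "\<exists>!e. e \<in> A_carrier n \<and> (\<forall>j<n. poly e (\<alpha> ^ j) = (if j = k then 1 else 0))"
    using A_eqI by (intro ex1I[of _ e]) (auto simp: A_carrier_iff)
  from theI'[OF this]
  show "eps n \<alpha> k \<in> A_carrier n" "j < n \<Longrightarrow> poly (eps n \<alpha> k) (\<alpha> ^ j) = (if j = k then 1 else 0)"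
    unfolding eps_def by auto
qed

lemma poly_eps_0: "poly (eps n \<alpha> 0) (\<alpha> ^ m) = (if n dvd m then 1 else 0)"
  using eps_spec(2)[of 0 "m mod n"] order_pos by (simp add: power_mod_order dvd_eq_mod_eq_0)

lemma skew_mult_in_carrier: "skew_mult n \<alpha> f g \<in> skew_carrier n"
  unfolding skew_carrier_def
  by (auto simp: coeff_skew_mult A_carrier_iff A_mult_def
      intro!: degree_sum_less degree_A_red order_pos)

lemma lift_poly_in_carrier: "lift_poly (u :: 'a poly) \<in> skew_carrier n"
  using order_pos by (simp add: skew_carrier_def A_carrier_iff)

lemma pmap_in_carrier: "pmap n (v :: nat \<Rightarrow> 'a poly) \<in> skew_carrier n"
  using order_pos
  by (auto simp: skew_carrier_def A_carrier_iff coeff_pmap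
      intro!: degree_sum_less le_less_trans[OF degree_monom_le])

lemma skew_eqI:
  assumes "f \<in> skew_carrier n" "g \<in> skew_carrier n"
    and "\<And>k j. j < n \<Longrightarrow> poly (coeff f k) (\<alpha> ^ j) = poly (coeff g k) (\<alpha> ^ j)"
  shows "f = g"
  using assms by (intro poly_eqI A_eqI) (auto simp: skew_carrier_def A_carrier_iff)

lemma poly_coeff_skew_mult:
  "poly (coeff (skew_mult n \<alpha> f g) k) (\<alpha> ^ j) =
     (\<Sum>\<nu>\<le>k. poly (coeff f (k - \<nu>)) (\<alpha> ^ (j + \<nu>)) * poly (coeff g \<nu>) (\<alpha> ^ j))"
  by (simp add: coeff_skew_mult poly_sum poly_A_mult poly_A_sigma_iter)

lemma poly_coeff_skew_mult_const_left:
  "poly (coeff (skew_mult n \<alpha> [:a:] g) k) (\<alpha> ^ j) = poly a (\<alpha> ^ (j + k)) * poly (coeff g k) (\<alpha> ^ j)"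
proof -
  have "poly (coeff (skew_mult n \<alpha> [:a:] g) k) (\<alpha> ^ j) =
      (\<Sum>\<nu>\<le>k. if \<nu> = k then poly a (\<alpha> ^ (j + \<nu>)) * poly (coeff g \<nu>) (\<alpha> ^ j) else 0)"
    unfolding poly_coeff_skew_mult
    by (intro sum.cong refl) (auto simp: coeff_pCons split: nat.split)
  then show ?thesis
    by simp
qed

lemma poly_coeff_skew_mult_linear_right:
  "poly (coeff (skew_mult n \<alpha> f [:b, c:]) k) (\<alpha> ^ j) =
     poly (coeff f k) (\<alpha> ^ j) * poly b (\<alpha> ^ j) +
     (if k = 0 then 0 else poly (coeff f (k - 1)) (\<alpha> ^ (j + 1)) * poly c (\<alpha> ^ j))"
proof -
  define t where
    "t \<nu> = poly (coeff f (k - \<nu>)) (\<alpha> ^ (j + \<nu>)) * poly (coeff [:b, c:] \<nu>) (\<alpha> ^ j)" for \<nu>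
  have "(\<Sum>\<nu>\<le>k. t \<nu>) = (\<Sum>\<nu>\<in>{..k} \<inter> {..1}. t \<nu>)"
    by (rule sum.mono_neutral_right) (auto simp: t_def coeff_pCons split: nat.split)
  also have "{..k} \<inter> {..1} = (if k = 0 then {0} else {0, 1})"
    by auto
  finally show ?thesis
    by (simp add: poly_coeff_skew_mult t_def)
qed

lemma skew_left_ideal_eq_lift_multiples:
  assumes "\<And>\<nu> j. j < n \<Longrightarrow> \<not> n dvd j + \<nu> \<Longrightarrow> poly (coeff g \<nu>) (\<alpha> ^ j) = 0"
  shows "skew_left_ideal n \<alpha> g = range (\<lambda>u. skew_mult n \<alpha> (lift_poly u) g)"
proof -
  have "skew_mult n \<alpha> f g = skew_mult n \<alpha> (lift_poly (map_poly (\<lambda>a. poly a 1) f)) g" for f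
  proof (rule skew_eqI[OF skew_mult_in_carrier skew_mult_in_carrier])
    fix k j :: nat assume "j < n"
    have evals: "poly (coeff f (k - \<nu>)) (\<alpha> ^ (j + \<nu>)) * poly (coeff g \<nu>) (\<alpha> ^ j) =
        poly (coeff f (k - \<nu>)) 1 * poly (coeff g \<nu>) (\<alpha> ^ j)" for \<nu>
      using assms[of j \<nu>] \<open>j < n\<close> by (cases "n dvd j + \<nu>") (simp_all flip: power_eq_one_iff)
    show "poly (coeff (skew_mult n \<alpha> f g) k) (\<alpha> ^ j) =
        poly (coeff (skew_mult n \<alpha> (lift_poly (map_poly (\<lambda>a. poly a 1) f)) g) k) (\<alpha> ^ j)"
      unfolding poly_coeff_skew_mult by (intro sum.cong refl) (simp add: coeff_map_poly evals)
  qed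
  then show ?thesis
    unfolding skew_left_ideal_def using lift_poly_in_carrier by blast
qed

lemma pmap_mult_left: "pmap n (\<lambda>i. u * v i) = skew_mult n \<alpha> (lift_poly u) (pmap n v)"
proof (rule skew_eqI[OF pmap_in_carrier skew_mult_in_carrier])
  fix k j :: nat
  have "coeff (u * v i) k = (\<Sum>\<nu>\<le>k. coeff u (k - \<nu>) * coeff (v i) \<nu>)" for i
    unfolding mult.commute[of u] coeff_mult by (simp add: mult.commute)
  then have "poly (coeff (pmap n (\<lambda>i. u * v i)) k) (\<alpha> ^ j) =
      (\<Sum>i<n. \<Sum>\<nu>\<le>k. coeff u (k - \<nu>) * (coeff (v i) \<nu> * (\<alpha> ^ j) ^ i))"
    by (simp add: poly_coeff_pmap sum_distrib_left sum_distrib_right mult_ac)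
  also have "\<dots> = (\<Sum>\<nu>\<le>k. \<Sum>i<n. coeff u (k - \<nu>) * (coeff (v i) \<nu> * (\<alpha> ^ j) ^ i))"
    by (rule sum.swap)
  also have "\<dots> = poly (coeff (skew_mult n \<alpha> (lift_poly u) (pmap n v)) k) (\<alpha> ^ j)"
    by (simp add: poly_coeff_skew_mult poly_coeff_pmap sum_distrib_left)
  finally show "poly (coeff (pmap n (\<lambda>i. u * v i)) k) (\<alpha> ^ j) =
      poly (coeff (skew_mult n \<alpha> (lift_poly u) (pmap n v)) k) (\<alpha> ^ j)" .
qed

lemma poly_coeff_pmap_G_entry:
  "poly (coeff (pmap n (G_entry \<alpha> \<delta>)) k) (\<alpha> ^ j) = (if k \<le> \<delta> \<and> n dvd j + k then of_nat n else 0)"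
proof -
  have "\<alpha> ^ (k * i) * (\<alpha> ^ j) ^ i = (\<alpha> ^ (j + k)) ^ i" for i
    by (simp add: power_add power_mult power_mult_distrib)
  then show ?thesis
    by (cases "k \<le> \<delta>") (simp_all add: poly_coeff_pmap coeff_G_entry geometric_sum_powers)
qed

lemma image_pmap_code_C: "pmap n ` code_C n \<alpha> \<delta> = skew_left_ideal n \<alpha> (pmap n (G_entry \<alpha> \<delta>))"
proof -
  have "code_C n \<alpha> \<delta> = range (\<lambda>u i. if i < n then u * G_entry \<alpha> \<delta> i else 0)"
    unfolding code_C_def by blast
  then have "pmap n ` code_C n \<alpha> \<delta> = range (\<lambda>u. pmap n (\<lambda>i. u * G_entry \<alpha> \<delta> i))"
    by (simp add: image_image pmap_restrict)
  also have "\<dots> = range (\<lambda>u. skew_mult n \<alpha> (lift_poly u) (pmap n (G_entry \<alpha> \<delta>)))"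
    by (simp add: pmap_mult_left)
  also have "\<dots> = skew_left_ideal n \<alpha> (pmap n (G_entry \<alpha> \<delta>))"
    by (rule skew_left_ideal_eq_lift_multiples[symmetric]) (simp add: poly_coeff_pmap_G_entry)
  finally show ?thesis .
qed

lemma poly_A_red_prod_nontrivial_factors:
  "poly (A_red n (\<Prod>i\<in>{1..<n}. [:- (\<alpha> ^ i), 1:])) (\<alpha> ^ m) = (if n dvd m then of_nat n else 0)"
  unfolding poly_A_red prod_nontrivial_factors
  by (simp add: poly_sum poly_monom geometric_sum_powers)

lemma pmap_G_entry_factorization:
  "pmap n (G_entry \<alpha> \<delta>) = skew_mult n \<alpha> [:A_red n (\<Prod>i\<in>{1..<n}. [:- (\<alpha> ^ i), 1:]):] (zsum \<delta>)"
  by (rule skew_eqI[OF pmap_in_carrier skew_mult_in_carrier])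
    (unfold poly_coeff_skew_mult_const_left poly_A_red_prod_nontrivial_factors,
      simp add: poly_coeff_pmap_G_entry coeff_zsum)

lemma poly_coeff_eps_zsum:
  "poly (coeff (skew_mult n \<alpha> [:eps n \<alpha> 0:] (zsum \<delta>)) k) (\<alpha> ^ j) =
     (if k \<le> \<delta> \<and> n dvd j + k then 1 else 0)"
  by (simp add: poly_coeff_skew_mult_const_left poly_eps_0 coeff_zsum)

lemma pmap_G_entry_eq_smult_eps_zsum:
  "pmap n (G_entry \<alpha> \<delta>) = smult [:of_nat n:] (skew_mult n \<alpha> [:eps n \<alpha> 0:] (zsum \<delta>))"
  by (rule skew_eqI[OF pmap_in_carrier smult_const_in_skew_carrier[OF skew_mult_in_carrier]])
    (simp add: poly_coeff_pmap_G_entry poly_coeff_eps_zsum)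

lemma skew_left_ideal_eps_zsum:
  "skew_left_ideal n \<alpha> (skew_mult n \<alpha> [:eps n \<alpha> 0:] (zsum \<delta>)) = pmap n ` code_C n \<alpha> \<delta>"
  by (simp add: image_pmap_code_C pmap_G_entry_eq_smult_eps_zsum skew_left_ideal_smult
      of_nat_order_ne_0)

lemma eps_zsum_Suc:
  assumes "Suc (Suc d) \<le> n"
  shows "skew_mult n \<alpha> (skew_mult n \<alpha> [:eps n \<alpha> 0:] (zsum d)) [:1, eps n \<alpha> (n - Suc d):] =
    skew_mult n \<alpha> [:eps n \<alpha> 0:] (zsum (Suc d))"
proof (rule skew_eqI[OF skew_mult_in_carrier skew_mult_in_carrier])
  fix k j :: nat assume "j < n"
  have eps_j: "poly (eps n \<alpha> (n - Suc d)) (\<alpha> ^ j) = (if j = n - Suc d then 1 else 0)"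
    using assms \<open>j < n\<close> by (simp add: eps_spec(2))
  have "poly (coeff (skew_mult n \<alpha> (skew_mult n \<alpha> [:eps n \<alpha> 0:] (zsum d))
        [:1, eps n \<alpha> (n - Suc d):]) k) (\<alpha> ^ j) =
      (if k \<le> d \<and> n dvd j + k then 1 else 0) +
      (if 0 < k \<and> k \<le> Suc d \<and> n dvd j + k \<and> j = n - Suc d then 1 else 0)"
    using poly_coeff_eps_zsum[of d "k - 1" "j + 1"]
    by (cases k)
      (simp_all add: poly_coeff_skew_mult_linear_right poly_coeff_eps_zsum eps_j del: power_Suc)
  also have "\<dots> = (if k \<le> Suc d \<and> n dvd j + k then 1 else 0)"
  proof (cases "k \<le> Suc d \<and> n dvd j + k")
    case True
    show ?thesis
    proof (cases "k = 0")
      case False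
      then have "j + k = n"
        using True assms \<open>j < n\<close> nat_dvd_iff_eq_of_less_double[of "j + k" n] by auto
      then show ?thesis
        using True False assms by auto
    qed (use True in simp)
  qed auto
  finally show "poly (coeff (skew_mult n \<alpha> (skew_mult n \<alpha> [:eps n \<alpha> 0:] (zsum d))
        [:1, eps n \<alpha> (n - Suc d):]) k) (\<alpha> ^ j) =
      poly (coeff (skew_mult n \<alpha> [:eps n \<alpha> 0:] (zsum (Suc d))) k) (\<alpha> ^ j)"
    by (simp add: poly_coeff_eps_zsum)
qed

lemma eps_zsum_foldl:
  assumes "d \<le> n - 1"
  shows "skew_mult n \<alpha> [:eps n \<alpha> 0:] (zsum d) =
    foldl (skew_mult n \<alpha>) [:eps n \<alpha> 0:] (map (\<lambda>j. [:1, eps n \<alpha> (n - j):]) [1..<d+1])"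
  using assms
proof (induction d)
  case 0
  have "[:eps n \<alpha> 0:] \<in> skew_carrier n"
    using eps_spec(1)[of 0] order_pos
    by (auto simp: skew_carrier_def A_carrier_iff coeff_pCons split: nat.split)
  then show ?case
    by (simp add: zsum_def skew_mult_one_right)
next
  case (Suc d)
  have "foldl (skew_mult n \<alpha>) [:eps n \<alpha> 0:] (map (\<lambda>j. [:1, eps n \<alpha> (n - j):]) [1..<Suc d + 1]) =
      skew_mult n \<alpha>
        (foldl (skew_mult n \<alpha>) [:eps n \<alpha> 0:] (map (\<lambda>j. [:1, eps n \<alpha> (n - j):]) [1..<d + 1]))
        [:1, eps n \<alpha> (n - Suc d):]"
    by (simp del: upt_Suc add: upt_Suc_append)
  also have "\<dots> = skew_mult n \<alpha> (skew_mult n \<alpha> [:eps n \<alpha> 0:] (zsum d)) [:1, eps n \<alpha> (n - Suc d):]"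
    using Suc by simp
  also have "\<dots> = skew_mult n \<alpha> [:eps n \<alpha> 0:] (zsum (Suc d))"
    using Suc.prems by (intro eps_zsum_Suc) auto
  finally show ?case
    by (rule sym)
qed

end

theorem theorem4p6:
  fixes \<alpha> :: "'a::{field, finite}" and n \<delta> :: nat
  assumes "\<alpha> \<noteq> 0" and "mult_ord \<alpha> = n" and "\<delta> \<le> n - 1"
  shows
    "(\<Sum>\<nu>\<le>\<delta>. monom (\<Sum>i<n. monom (\<alpha> ^ (\<nu> * i)) i) \<nu>)
       = skew_mult n \<alpha> [: A_red n (\<Prod>i\<in>{1..<n}. [:- (\<alpha> ^ i), 1:]) :] (zsum \<delta>)
     \<and> pmap n ` code_C n \<alpha> \<delta>
       = skew_left_ideal n \<alpha> (\<Sum>\<nu>\<le>\<delta>. monom (\<Sum>i<n. monom (\<alpha> ^ (\<nu> * i)) i) \<nu>)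
     \<and> skew_mult n \<alpha> [: eps n \<alpha> 0 :] (zsum \<delta>)
       = foldl (skew_mult n \<alpha>) [: eps n \<alpha> 0 :] (map (\<lambda>j. [: 1, eps n \<alpha> (n - j) :]) [1..<\<delta>+1])
     \<and> pmap n ` code_C n \<alpha> \<delta>
       = skew_left_ideal n \<alpha> (skew_mult n \<alpha> [: eps n \<alpha> 0 :] (zsum \<delta>))"
proof -
  interpret primitive_root n \<alpha>
    using primitive_root_mult_ord[OF assms(1)] assms(2) by simp
  show ?thesis
    using pmap_G_entry_factorization[of \<delta>] image_pmap_code_C[of \<delta>]
      eps_zsum_foldl[OF assms(3)] skew_left_ideal_eps_zsum[of \<delta>]
    by (simp add: pmap_G_entry)
qed

end
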